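(* Let $G_4=K_{3,3}$, drawn as a regular hexagon with vertices $u_1,\dots,u_6$ in cyclic order, whose edges are the six sides $u_iu_{i+1}$ (indices mod 6) and the three long diagonals $u_1u_4,u_2u_5,u_3u_6$. Let the dihedral group $D_6$ of order $12$ (the symmetry group of the hexagon) act on edge labellings of $G_4$ via its action on the edges. For $s\ge0$ let $\widetilde{h}(s)$ be the number of magic distinct labellings of $G_4$ with magic sum $s$ counted up to this $D_6$-action (i.e. the number of $D_6$-orbits). Then $\widetilde{h}(s)$ is divisible by $6$ for every $s$.
   Context: A magic labelling of a finite graph is an assignment of nonnegative integer labels to its edges such that for every vertex the sum of the labels of the incident edges equals the same number $s$ (the magic sum). A magic distinct labelling is a magic labelling whose labels are pairwise distinct. *)

theory Defs
  imports Main
begin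

text \<open>Vertices u_1..u_6 of the hexagon are represented by 0..5 (u_(i+1) = i).
  Edges are two-element vertex sets.\<close>

definition G4_vertices :: "nat set" where
  "G4_vertices = {0..<6}"

definition G4_edges :: "nat set set" where
  "G4_edges = {{i, (i + 1) mod 6} | i. i < 6} \<union> {{i, i + 3} | i. i < 3}"

text \<open>An edge labelling is a function from edges to nonnegative integers;
  it is normalised to be 0 outside the edge set so that it is determined by its
  values on the edges.\<close>

definition is_labelling :: "(nat set \<Rightarrow> nat) \<Rightarrow> bool" where
  "is_labelling f \<longleftrightarrow> (\<forall>e. e \<notin> G4_edges \<longrightarrow> f e = 0)"

definition magic_with_sum :: "nat \<Rightarrow> (nat set \<Rightarrow> nat) \<Rightarrow> bool" where
  "magic_with_sum s f \<longleftrightarrow>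
     (\<forall>v\<in>G4_vertices. (\<Sum>e\<in>{e\<in>G4_edges. v \<in> e}. f e) = s)"

definition magic_distinct_labellings :: "nat \<Rightarrow> (nat set \<Rightarrow> nat) set" where
  "magic_distinct_labellings s =
     {f. is_labelling f \<and> magic_with_sum s f \<and> inj_on f G4_edges}"

definition D6 :: "(nat \<Rightarrow> nat) set" where
  "D6 = {(\<lambda>i. (k + i) mod 6) | k. k < 6} \<union> {(\<lambda>i. (k + 6 - i mod 6) mod 6) | k. k < 6}"

definition D6_orbit :: "(nat set \<Rightarrow> nat) \<Rightarrow> (nat set \<Rightarrow> nat) set" where
  "D6_orbit f = {f'. is_labelling f' \<and> (\<exists>g\<in>D6. \<forall>e\<in>G4_edges. f' (g ` e) = f e)}"

definition h_tilde :: "nat \<Rightarrow> nat" where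
  "h_tilde s = card (D6_orbit ` magic_distinct_labellings s)"

end

theory Submission
  imports Defs "HOL-Combinatorics.Permutations"
begin

text \<open>The hexagon with its long diagonals is \<open>K\<^sub>3\<^sub>,\<^sub>3\<close>, the colour classes being the even and
  the odd vertices. Its automorphism group \<open>Aut\<close> has order \<open>2 \<cdot> 3! \<cdot> 3! = 72\<close> (permute each class,
  possibly swap the classes) and contains \<open>D\<^sub>6\<close>. Both groups act freely on the magic distinct
  labellings: an automorphism fixing such a labelling fixes every edge, because the labels are
  distinct, and hence every vertex, because each vertex is the common endpoint of two of its edges.
  So the number of magic distinct labellings with sum \<open>s\<close> is both \<open>12 \<cdot> h(s)\<close> and
  \<open>72 \<cdot> N(s)\<close>, with \<open>N(s)\<close> the number of \<open>Aut\<close>-orbits, whence \<open>h(s) = 6 \<cdot> N(s)\<close>.\<close>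

section \<open>Counting the orbits of a free action\<close>

lemma card_eq_card_mult_card_orbits_if_free:
  fixes act :: "'g \<Rightarrow> 'x \<Rightarrow> 'x"
  assumes "finite X" "finite G" "G \<noteq> {}"
    and closed: "\<And>g x. g \<in> G \<Longrightarrow> x \<in> X \<Longrightarrow> act g x \<in> X"
    and comp: "\<And>g h. g \<in> G \<Longrightarrow> h \<in> G \<Longrightarrow> \<exists>k\<in>G. \<forall>x\<in>X. act h (act g x) = act k x"
    and inv: "\<And>g x. g \<in> G \<Longrightarrow> x \<in> X \<Longrightarrow> \<exists>h\<in>G. act h (act g x) = x"
    and free: "\<And>g h x. g \<in> G \<Longrightarrow> h \<in> G \<Longrightarrow> x \<in> X \<Longrightarrow> act g x = act h x \<Longrightarrow> g = h"
  shows "card X = card G * card ((\<lambda>x. (\<lambda>g. act g x) ` G) ` X)"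
proof -
  define orbit where "orbit x = (\<lambda>g. act g x) ` G" for x
  have orbit_trans: "orbit y \<subseteq> orbit x" if "x \<in> X" "y \<in> orbit x" for x y
  proof
    fix z assume "z \<in> orbit y"
    then obtain g h where "g \<in> G" "h \<in> G" "y = act g x" "z = act h y"
      using \<open>y \<in> orbit x\<close> unfolding orbit_def by blast
    then show "z \<in> orbit x" using comp \<open>x \<in> X\<close> unfolding orbit_def by blast
  qed
  have orbit_sym: "x \<in> orbit y" if "x \<in> X" "y \<in> orbit x" for x y
  proof -
    obtain g where "g \<in> G" "y = act g x" using \<open>y \<in> orbit x\<close> unfolding orbit_def by blast
    then obtain h where "h \<in> G" "act h y = x" using inv \<open>x \<in> X\<close> by blast
    then show ?thesis unfolding orbit_def by blast
  qed
  have orbit_subset: "orbit x \<subseteq> X" if "x \<in> X" for x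
    using closed that unfolding orbit_def by blast
  have orbit_eq: "orbit y = orbit x" if "x \<in> X" "y \<in> orbit x" for x y
    using orbit_trans orbit_sym orbit_subset that by (meson subsetD subset_antisym)
  have in_orbit: "x \<in> orbit x" if "x \<in> X" for x
  proof -
    obtain g where "g \<in> G" using \<open>G \<noteq> {}\<close> by blast
    then have "act g x \<in> orbit x" unfolding orbit_def by blast
    then show ?thesis using orbit_sym[OF that] orbit_trans[OF that] by blast
  qed
  have "card G * card (orbit ` X) = card (\<Union> (orbit ` X))"
  proof (rule card_partition)
    show "finite (orbit ` X)" "finite (\<Union> (orbit ` X))"
      using \<open>finite X\<close> \<open>finite G\<close> unfolding orbit_def by auto
    show "card c = card G" if c: "c \<in> orbit ` X" for c
    proof -
      obtain x where "x \<in> X" "c = orbit x" using c by blast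
      moreover have "inj_on (\<lambda>g. act g x) G"
        using free \<open>x \<in> X\<close> by (blast intro: inj_onI)
      ultimately show ?thesis unfolding orbit_def by (simp add: card_image)
    qed
    show "c1 \<inter> c2 = {}" if c12: "c1 \<in> orbit ` X" "c2 \<in> orbit ` X" "c1 \<noteq> c2" for c1 c2
    proof (rule ccontr)
      assume "c1 \<inter> c2 \<noteq> {}"
      then obtain x y z where "x \<in> X" "y \<in> X" "c1 = orbit x" "c2 = orbit y"
        "z \<in> orbit x" "z \<in> orbit y"
        using c12(1,2) by blast
      then show False using orbit_eq \<open>c1 \<noteq> c2\<close> by metis
    qed
  qed
  also have "\<Union> (orbit ` X) = X"
    using orbit_subset in_orbit by blast
  finally show ?thesis unfolding orbit_def by simp
qed

section \<open>The graph \<open>G\<^sub>4 = K\<^sub>3\<^sub>,\<^sub>3\<close> and its automorphisms\<close>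

lemma less_6_iff: "(v::nat) < 6 \<longleftrightarrow> v \<in> {0, 1, 2, 3, 4, 5}"
  by auto

lemma G4_edges_eq: "G4_edges = {{a, b} | a b. a < 6 \<and> b < 6 \<and> odd (a + b)}"
  (is "_ = ?odd_pairs")
proof (intro equalityI subsetI)
  fix e assume "e \<in> G4_edges"
  then consider (side) i where "e = {i, (i + 1) mod 6}" "i < 6"
    | (diagonal) i where "e = {i, i + 3}" "i < 3"
    unfolding G4_edges_def by blast
  then show "e \<in> ?odd_pairs"
  proof cases
    case side
    moreover have "odd (i + (i + 1) mod 6)" "(i + 1) mod 6 < 6"
      using side(2) unfolding less_6_iff by auto
    ultimately show ?thesis by blast
  next
    case diagonal
    moreover have "odd (i + (i + 3))" by presburger
    moreover have "i < 6" "i + 3 < 6" using diagonal(2) by simp_all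
    ultimately show ?thesis by blast
  qed
next
  fix e assume "e \<in> ?odd_pairs"
  then obtain a b where e: "e = {a, b}" "a < 6" "b < 6" "odd (a + b)" by blast
  then have "b = (a + 1) mod 6 \<or> a = (b + 1) mod 6 \<or> b = a + 3 \<or> a = b + 3"
    unfolding less_6_iff by auto
  then have "e \<in> {{i, (i + 1) mod 6} |i. i < 6} \<union> {{i, i + 3} |i. i < 3}"
  proof (elim disjE)
    assume "b = (a + 1) mod 6" then show ?thesis using e(1,2) by blast
  next
    assume "a = (b + 1) mod 6" then show ?thesis using e(1,3) by (auto simp: insert_commute)
  next
    assume "b = a + 3" then show ?thesis using e(1,3) by auto
  next
    assume "a = b + 3" then show ?thesis using e(1,2) by (auto simp: insert_commute)
  qed
  then show "e \<in> G4_edges" unfolding G4_edges_def .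
qed

lemma G4_edgeE:
  assumes "e \<in> G4_edges"
  obtains a b where "e = {a, b}" "a < 6" "b < 6" "odd (a + b)"
  using assms unfolding G4_edges_eq by blast

lemma G4_edgeI: "a < 6 \<Longrightarrow> b < 6 \<Longrightarrow> odd (a + b) \<Longrightarrow> {a, b} \<in> G4_edges"
  unfolding G4_edges_eq by blast

lemma G4_edge_subset: "e \<in> G4_edges \<Longrightarrow> e \<subseteq> {..<6}"
  by (erule G4_edgeE) auto

lemma finite_G4_edges: "finite G4_edges"
  by (rule finite_subset[of _ "Pow {..<6}"]) (auto dest: G4_edge_subset)

definition G4_automorphism :: "(nat \<Rightarrow> nat) \<Rightarrow> bool" where
  "G4_automorphism g \<longleftrightarrow> inj_on g {..<6} \<and> (\<forall>e\<in>G4_edges. g ` e \<in> G4_edges)"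

lemma G4_automorphismI:
  assumes "inj_on g {..<6}" and "\<And>v. v < 6 \<Longrightarrow> g v < 6"
    and "\<And>a b. a < 6 \<Longrightarrow> b < 6 \<Longrightarrow> odd (a + b) \<Longrightarrow> odd (g a + g b)"
  shows "G4_automorphism g"
proof -
  have "g ` e \<in> G4_edges" if e: "e \<in> G4_edges" for e
  proof -
    obtain a b where ab: "e = {a, b}" "a < 6" "b < 6" "odd (a + b)"
      using e by (rule G4_edgeE)
    then have "g a < 6" "g b < 6" "odd (g a + g b)" using assms(2,3) by blast+
    then have "{g a, g b} \<in> G4_edges" by (rule G4_edgeI)
    then show ?thesis using ab(1) by simp
  qed
  then show ?thesis unfolding G4_automorphism_def using assms(1) by blast
qed

lemma G4_automorphism_less:
  assumes "G4_automorphism g" and "v < 6"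
  shows "g v < 6"
proof -
  have "{v, (v + 1) mod 6} \<in> G4_edges"
    using \<open>v < 6\<close> unfolding G4_edges_def by blast
  then have "g ` {v, (v + 1) mod 6} \<in> G4_edges"
    using assms(1) unfolding G4_automorphism_def by blast
  then have "g ` {v, (v + 1) mod 6} \<subseteq> {..<6}" by (rule G4_edge_subset)
  then show ?thesis by simp
qed

lemma G4_automorphism_inj_on_edges:
  assumes "G4_automorphism g"
  shows "inj_on (\<lambda>e. g ` e) G4_edges"
proof (rule inj_onI)
  fix x y assume "x \<in> G4_edges" "y \<in> G4_edges" "g ` x = g ` y"
  then show "x = y"
    using assms inj_on_image_eq_iff[of g "{..<6}" x y] G4_edge_subset
    unfolding G4_automorphism_def by blast
qed

lemma G4_automorphism_edges_eq:
  assumes "G4_automorphism g"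
  shows "(\<lambda>e. g ` e) ` G4_edges = G4_edges"
proof (rule card_subset_eq[OF finite_G4_edges])
  show "(\<lambda>e. g ` e) ` G4_edges \<subseteq> G4_edges"
    using assms unfolding G4_automorphism_def by blast
  have "inj_on (\<lambda>e. g ` e) G4_edges"
    using assms by (rule G4_automorphism_inj_on_edges)
  then show "card ((\<lambda>e. g ` e) ` G4_edges) = card G4_edges"
    by (rule card_image)
qed

lemma G4_automorphism_image_edges_at:
  assumes g: "G4_automorphism g" and "v < 6"
  shows "(\<lambda>e. g ` e) ` {e \<in> G4_edges. v \<in> e} = {e \<in> G4_edges. g v \<in> e}"
proof (intro equalityI subsetI)
  have edges: "(\<lambda>e. g ` e) ` G4_edges = G4_edges"
    using g by (rule G4_automorphism_edges_eq)
  fix e' assume "e' \<in> (\<lambda>e. g ` e) ` {e \<in> G4_edges. v \<in> e}"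
  then show "e' \<in> {e \<in> G4_edges. g v \<in> e}" using edges by blast
next
  fix e' assume e': "e' \<in> {e \<in> G4_edges. g v \<in> e}"
  then obtain e where e: "e \<in> G4_edges" "e' = g ` e"
    using G4_automorphism_edges_eq[OF g] by blast
  then have "v \<in> e"
    using e' g \<open>v < 6\<close> G4_edge_subset[OF e(1)] inj_on_image_mem_iff[of g "{..<6}" v e]
    unfolding G4_automorphism_def by auto
  then show "e' \<in> (\<lambda>e. g ` e) ` {e \<in> G4_edges. v \<in> e}" using e by blast
qed

lemma G4_automorphism_eq_if_edge_images_eq:
  assumes "G4_automorphism g" "G4_automorphism h"
    and "\<forall>e\<in>G4_edges. g ` e = h ` e" and "v < 6"
  shows "g v = h v"
proof -
  define u w where "u = (v + 1) mod 6" and "w = (v + 3) mod 6"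
  have uw: "u < 6" "w < 6" "odd (v + u)" "odd (v + w)" "u \<noteq> w" "v \<noteq> u"
    using \<open>v < 6\<close> unfolding u_def w_def less_6_iff by auto
  have "g ` {v, u} = h ` {v, u}" "g ` {v, w} = h ` {v, w}"
    using assms(3) G4_edgeI[OF \<open>v < 6\<close> uw(1,3)] G4_edgeI[OF \<open>v < 6\<close> uw(2,4)] by blast+
  then have "g v \<in> {h v, h u}" "g v \<in> {h v, h w}" by blast+
  moreover have "h u \<noteq> h w"
    using assms(2) uw \<open>v < 6\<close> unfolding G4_automorphism_def inj_on_def by auto
  ultimately show ?thesis by auto
qed

definition relabel :: "(nat \<Rightarrow> nat) \<Rightarrow> (nat set \<Rightarrow> nat) \<Rightarrow> nat set \<Rightarrow> nat" where
  "relabel g f e = (if e \<in> G4_edges then f (g ` e) else 0)"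

definition relabel_orbits :: "(nat \<Rightarrow> nat) set \<Rightarrow> nat \<Rightarrow> (nat set \<Rightarrow> nat) set set" where
  "relabel_orbits A s = (\<lambda>f. (\<lambda>g. relabel g f) ` A) ` magic_distinct_labellings s"

lemma relabel_relabel:
  assumes "G4_automorphism h"
  shows "relabel h (relabel g f) = relabel (g \<circ> h) f"
proof
  fix e
  show "relabel h (relabel g f) e = relabel (g \<circ> h) f e"
    using assms unfolding relabel_def G4_automorphism_def by (simp add: image_comp)
qed

lemma relabel_cong:
  assumes "\<forall>v<6. g v = h v"
  shows "relabel g f = relabel h f"
proof -
  have "g ` e = h ` e" if "e \<in> G4_edges" for e
    using assms G4_edge_subset[OF that] by (auto intro!: image_cong)
  then show ?thesis unfolding relabel_def by auto
qed

lemma relabel_id: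
  assumes "is_labelling f"
  shows "relabel id f = f"
  using assms unfolding relabel_def is_labelling_def by auto

lemma relabel_in_magic_distinct_labellings:
  assumes g: "G4_automorphism g" and f: "f \<in> magic_distinct_labellings s"
  shows "relabel g f \<in> magic_distinct_labellings s"
proof -
  have edges: "(\<lambda>e. g ` e) ` G4_edges = G4_edges"
    using g by (rule G4_automorphism_edges_eq)
  have inj_edges: "inj_on (\<lambda>e. g ` e) G4_edges"
    using g by (rule G4_automorphism_inj_on_edges)
  have "inj_on f G4_edges"
    using f unfolding magic_distinct_labellings_def by blast
  then have "inj_on (f \<circ> (\<lambda>e. g ` e)) G4_edges"
    by (intro comp_inj_on[OF inj_edges]) (simp add: edges)
  moreover have "inj_on (relabel g f) G4_edges \<longleftrightarrow> inj_on (f \<circ> (\<lambda>e. g ` e)) G4_edges"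
    by (rule inj_on_cong) (simp add: relabel_def)
  ultimately have "inj_on (relabel g f) G4_edges" by blast
  moreover have "magic_with_sum s (relabel g f)"
    unfolding magic_with_sum_def
  proof
    fix v assume "v \<in> G4_vertices"
    then have v: "v < 6" "g v \<in> G4_vertices"
      using G4_automorphism_less[OF g] unfolding G4_vertices_def by auto
    have "(\<lambda>e. g ` e) ` {e \<in> G4_edges. v \<in> e} = {e \<in> G4_edges. g v \<in> e}"
      using g v(1) by (rule G4_automorphism_image_edges_at)
    then have "bij_betw (\<lambda>e. g ` e) {e \<in> G4_edges. v \<in> e} {e \<in> G4_edges. g v \<in> e}"
      using inj_edges by (auto simp: bij_betw_def intro: inj_on_subset)
    then have "(\<Sum>e | e \<in> G4_edges \<and> v \<in> e. f (g ` e)) = (\<Sum>e | e \<in> G4_edges \<and> g v \<in> e. f e)"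
      by (rule sum.reindex_bij_betw)
    also have "\<dots> = s"
      using f v(2) unfolding magic_distinct_labellings_def magic_with_sum_def by blast
    finally show "(\<Sum>e | e \<in> G4_edges \<and> v \<in> e. relabel g f e) = s"
      by (simp add: relabel_def)
  qed
  moreover have "is_labelling (relabel g f)"
    unfolding is_labelling_def relabel_def by simp
  ultimately show ?thesis unfolding magic_distinct_labellings_def by blast
qed

lemma relabel_eq_imp_eq_on_vertices:
  assumes "G4_automorphism g" "G4_automorphism h"
    and f: "f \<in> magic_distinct_labellings s" and eq: "relabel g f = relabel h f"
  shows "\<forall>v<6. g v = h v"
proof -
  have "g ` e = h ` e" if e: "e \<in> G4_edges" for e
  proof -
    have "f (g ` e) = f (h ` e)"
      using fun_cong[OF eq, of e] e unfolding relabel_def by simp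
    moreover have "g ` e \<in> G4_edges" "h ` e \<in> G4_edges"
      using assms(1,2) e unfolding G4_automorphism_def by blast+
    moreover have "inj_on f G4_edges"
      using f unfolding magic_distinct_labellings_def by blast
    ultimately show ?thesis by (meson inj_onD)
  qed
  then show ?thesis
    using G4_automorphism_eq_if_edge_images_eq[OF assms(1,2)] by blast
qed

lemma finite_magic_distinct_labellings: "finite (magic_distinct_labellings s)"
proof (rule finite_subset)
  show "magic_distinct_labellings s
    \<subseteq> {f. \<forall>e. (e \<in> G4_edges \<longrightarrow> f e \<in> {0..s}) \<and> (e \<notin> G4_edges \<longrightarrow> f e = 0)}"
  proof
    fix f assume f: "f \<in> magic_distinct_labellings s"
    have "f e \<le> s" if e: "e \<in> G4_edges" for e
    proof -
      obtain a b where "e = {a, b}" "a < 6" using e by (elim G4_edgeE)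
      then have a: "a \<in> G4_vertices" "a \<in> e" unfolding G4_vertices_def by auto
      then have "f e \<le> (\<Sum>e' | e' \<in> G4_edges \<and> a \<in> e'. f e')"
        using e finite_G4_edges by (intro member_le_sum) auto
      also have "\<dots> = s"
        using f a(1) unfolding magic_distinct_labellings_def magic_with_sum_def by blast
      finally show ?thesis .
    qed
    then show "f \<in> {f. \<forall>e. (e \<in> G4_edges \<longrightarrow> f e \<in> {0..s}) \<and> (e \<notin> G4_edges \<longrightarrow> f e = 0)}"
      using f unfolding magic_distinct_labellings_def is_labelling_def by auto
  qed
  show "finite {f. \<forall>e. (e \<in> G4_edges \<longrightarrow> f e \<in> {0..s}) \<and> (e \<notin> G4_edges \<longrightarrow> f e = 0)}"
    by (rule finite_set_of_finite_funs[OF finite_G4_edges]) simp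
qed

lemma card_magic_distinct_labellings_eq_card_mult:
  assumes "finite A" "A \<noteq> {}"
    and aut: "\<And>g. g \<in> A \<Longrightarrow> G4_automorphism g"
    and comp: "\<And>g h. g \<in> A \<Longrightarrow> h \<in> A \<Longrightarrow> g \<circ> h \<in> A"
    and inv: "\<And>g. g \<in> A \<Longrightarrow> \<exists>h\<in>A. \<forall>v<6. g (h v) = v"
    and eq: "\<And>g h. g \<in> A \<Longrightarrow> h \<in> A \<Longrightarrow> \<forall>v<6. g v = h v \<Longrightarrow> g = h"
  shows "card (magic_distinct_labellings s) = card A * card (relabel_orbits A s)"
  unfolding relabel_orbits_def
proof (rule card_eq_card_mult_card_orbits_if_free[OF finite_magic_distinct_labellings assms(1,2)])
  show "relabel g f \<in> magic_distinct_labellings s"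
    if "g \<in> A" "f \<in> magic_distinct_labellings s" for g f
    using relabel_in_magic_distinct_labellings aut that by blast
  show "\<exists>k\<in>A. \<forall>f\<in>magic_distinct_labellings s. relabel h (relabel g f) = relabel k f"
    if "g \<in> A" "h \<in> A" for g h
    using that comp relabel_relabel[OF aut[OF \<open>h \<in> A\<close>]] by blast
  show "\<exists>h\<in>A. relabel h (relabel g f) = f"
    if g: "g \<in> A" and f: "f \<in> magic_distinct_labellings s" for g f
  proof -
    obtain h where h: "h \<in> A" "\<forall>v<6. g (h v) = v" using inv[OF g] by blast
    have "relabel h (relabel g f) = relabel (g \<circ> h) f"
      using aut[OF h(1)] by (rule relabel_relabel)
    also have "\<dots> = relabel id f" using h(2) by (intro relabel_cong) simp
    also have "\<dots> = f"
      using f unfolding magic_distinct_labellings_def by (blast intro: relabel_id)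
    finally show ?thesis using h(1) by blast
  qed
  show "g = h" if "g \<in> A" "h \<in> A" "f \<in> magic_distinct_labellings s"
    "relabel g f = relabel h f" for g h f
    using that eq aut relabel_eq_imp_eq_on_vertices by metis
qed

section \<open>The dihedral group\<close>

definition rot :: "nat \<Rightarrow> nat \<Rightarrow> nat" where
  "rot k = (\<lambda>i. (k + i) mod 6)"

definition reflect :: "nat \<Rightarrow> nat \<Rightarrow> nat" where
  "reflect k = (\<lambda>i. (k + 6 - i mod 6) mod 6)"

lemma D6_eq: "D6 = rot ` {..<6} \<union> reflect ` {..<6}"
  unfolding D6_def rot_def reflect_def by auto

lemma int_rot: "int (rot k i) = (int k + int i) mod 6"
  unfolding rot_def by (simp add: zmod_int)

lemma int_reflect: "int (reflect k i) = (int k - int i) mod 6"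
proof -
  have "int (reflect k i) = (int k - int i mod 6 + 6) mod 6"
    unfolding reflect_def by (simp add: zmod_int of_nat_diff algebra_simps)
  then show ?thesis by (simp add: mod_simps)
qed

lemma rot_comp_rot: "rot k \<circ> rot m = rot (rot k m)"
  by (simp add: fun_eq_iff int_rot int_reflect mod_simps algebra_simps flip: of_nat_eq_iff[where 'a=int])

lemma rot_comp_reflect: "rot k \<circ> reflect m = reflect (rot k m)"
  by (simp add: fun_eq_iff int_rot int_reflect mod_simps algebra_simps flip: of_nat_eq_iff[where 'a=int])

lemma reflect_comp_rot: "reflect k \<circ> rot m = reflect (reflect k m)"
  by (simp add: fun_eq_iff int_rot int_reflect mod_simps algebra_simps flip: of_nat_eq_iff[where 'a=int])

lemma reflect_comp_reflect: "reflect k \<circ> reflect m = rot (reflect k m)"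
  by (simp add: fun_eq_iff int_rot int_reflect mod_simps algebra_simps flip: of_nat_eq_iff[where 'a=int])

lemma rot_reflect_0: "rot k (reflect 0 k) = 0" "rot (reflect 0 k) k = 0"
proof -
  have "int (rot k (reflect 0 k)) = 0" "int (rot (reflect 0 k) k) = 0"
    by (simp_all add: int_rot int_reflect mod_simps)
  then show "rot k (reflect 0 k) = 0" "rot (reflect 0 k) k = 0" by simp_all
qed

lemma reflect_self: "reflect k k = 0"
proof -
  have "int (reflect k k) = 0" by (simp add: int_reflect)
  then show ?thesis by simp
qed

lemma rot_0: "v < 6 \<Longrightarrow> rot 0 v = v"
  unfolding rot_def by simp

lemma rot_less: "rot k i < 6"
  and reflect_less: "reflect k i < 6"
  unfolding rot_def reflect_def by simp_all

lemma even_mod_6: "even ((x::int) mod 6) \<longleftrightarrow> even x"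
  by (metis dvd_mod_iff dvd_triv_left numeral_Bit0_eq_double)

lemma even_rot: "even (rot k i) \<longleftrightarrow> even (k + i)"
proof -
  have "even (int (rot k i)) \<longleftrightarrow> even (int (k + i))"
    by (simp only: int_rot even_mod_6 of_nat_add)
  then show ?thesis by simp
qed

lemma even_reflect: "even (reflect k i) \<longleftrightarrow> even (k + i)"
proof -
  have "even (int (reflect k i)) \<longleftrightarrow> even (int k - int i)"
    by (simp only: int_reflect even_mod_6)
  then show ?thesis by simp
qed

lemma D6_comp: "g \<in> D6 \<Longrightarrow> h \<in> D6 \<Longrightarrow> g \<circ> h \<in> D6"
  unfolding D6_eq
  by (auto simp: rot_comp_rot rot_comp_reflect reflect_comp_rot reflect_comp_reflect rot_less reflect_less)

lemma D6_inverse: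
  assumes "g \<in> D6"
  shows "\<exists>h\<in>D6. \<forall>v<6. g (h v) = v \<and> h (g v) = v"
proof -
  consider k where "g = rot k" | k where "g = reflect k"
    using assms unfolding D6_eq by blast
  then show ?thesis
  proof cases
    case 1
    have "rot (reflect 0 k) \<in> D6" unfolding D6_eq using reflect_less by blast
    moreover have "\<forall>v<6. g (rot (reflect 0 k) v) = v \<and> rot (reflect 0 k) (g v) = v"
      using rot_comp_rot[of k] rot_comp_rot[of "reflect 0 k"]
      unfolding 1 by (simp add: fun_eq_iff rot_reflect_0 rot_0)
    ultimately show ?thesis by blast
  next
    case 2
    have "\<forall>v<6. g (g v) = v"
      using reflect_comp_reflect[of k k] unfolding 2 by (simp add: fun_eq_iff reflect_self rot_0)
    then show ?thesis using assms by blast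
  qed
qed

lemma D6_eq_if_eq_on_vertices:
  assumes "g \<in> D6" "h \<in> D6" "\<forall>v<6. g v = h v"
  shows "g = h"
proof
  have periodic: "f v = f (v mod 6)" if "f \<in> D6" for f v
    using that unfolding D6_eq rot_def reflect_def by (auto simp: mod_simps)
  fix v
  show "g v = h v"
    using periodic[OF assms(1)] periodic[OF assms(2)] assms(3) by simp
qed

lemma card_D6: "card D6 = 12"
proof -
  have "inj_on rot {..<6}" "inj_on reflect {..<6}"
    by (auto intro!: inj_onI dest!: fun_cong[where x = 0] simp: rot_def reflect_def)
  moreover have "rot a \<noteq> reflect b" if "a < 6" "b < 6" for a b
  proof
    assume "rot a = reflect b"
    then have "rot a 0 = reflect b 0" "rot a 1 = reflect b 1" by simp_all
    then show False using that unfolding rot_def reflect_def less_6_iff by auto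
  qed
  then have "rot ` {..<6} \<inter> reflect ` {..<6} = {}" by auto
  ultimately show ?thesis
    unfolding D6_eq by (simp add: card_Un_disjoint card_image)
qed

lemma D6_automorphism:
  assumes "g \<in> D6"
  shows "G4_automorphism g"
proof (rule G4_automorphismI)
  show "inj_on g {..<6}"
    using D6_inverse[OF assms] by (auto intro: inj_on_inverseI)
  show "g v < 6" for v
    using assms unfolding D6_eq by (auto simp: rot_less reflect_less)
  show "odd (g a + g b)" if "odd (a + b)" for a b
    using assms that unfolding D6_eq by (auto simp: even_rot even_reflect)
qed

lemma D6_orbit_eq:
  assumes "is_labelling f"
  shows "D6_orbit f = (\<lambda>g. relabel g f) ` D6"
proof (intro equalityI subsetI)
  fix f' assume "f' \<in> D6_orbit f"
  then obtain g where g: "g \<in> D6" "is_labelling f'" "\<forall>e\<in>G4_edges. f' (g ` e) = f e"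
    unfolding D6_orbit_def by blast
  obtain h where h: "h \<in> D6" "\<forall>v<6. g (h v) = v \<and> h (g v) = v"
    using D6_inverse[OF g(1)] by blast
  have "f' e = relabel h f e" for e
  proof (cases "e \<in> G4_edges")
    case True
    then have "h ` e \<in> G4_edges" "g ` h ` e = e"
      using D6_automorphism[OF h(1)] h(2) G4_edge_subset[OF True]
      unfolding G4_automorphism_def by (auto simp: image_image subset_iff)
    then show ?thesis using g(3) True unfolding relabel_def by metis
  next
    case False
    then show ?thesis using g(2) unfolding relabel_def is_labelling_def by simp
  qed
  then show "f' \<in> (\<lambda>g. relabel g f) ` D6" using h(1) by blast
next
  fix f' assume "f' \<in> (\<lambda>g. relabel g f) ` D6"
  then obtain h where h: "h \<in> D6" "f' = relabel h f" by blast
  obtain g where g: "g \<in> D6" "\<forall>v<6. h (g v) = v \<and> g (h v) = v"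
    using D6_inverse[OF h(1)] by blast
  have "f' (g ` e) = f e" if e: "e \<in> G4_edges" for e
  proof -
    have "g ` e \<in> G4_edges" "h ` g ` e = e"
      using D6_automorphism[OF g(1)] g(2) G4_edge_subset[OF e] e
      unfolding G4_automorphism_def by (auto simp: image_image subset_iff)
    then show ?thesis unfolding h(2) relabel_def by simp
  qed
  moreover have "is_labelling f'" unfolding h(2) is_labelling_def relabel_def by simp
  ultimately show "f' \<in> D6_orbit f" unfolding D6_orbit_def using g(1) by blast
qed

lemma card_magic_distinct_labellings_eq_12_mult_h_tilde:
  "card (magic_distinct_labellings s) = 12 * h_tilde s"
proof -
  have "card (magic_distinct_labellings s) = card D6 * card (relabel_orbits D6 s)"
  proof (rule card_magic_distinct_labellings_eq_card_mult)
    show "finite D6" "D6 \<noteq> {}" using card_D6 by (auto intro: card_ge_0_finite)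
    show "\<exists>h\<in>D6. \<forall>v<6. g (h v) = v" if "g \<in> D6" for g
      using D6_inverse[OF that] by blast
  qed (simp_all add: D6_automorphism D6_comp D6_eq_if_eq_on_vertices)
  also have "relabel_orbits D6 s = D6_orbit ` magic_distinct_labellings s"
    unfolding relabel_orbits_def
    by (rule image_cong) (auto simp: D6_orbit_eq magic_distinct_labellings_def)
  finally show ?thesis unfolding h_tilde_def card_D6 .
qed

section \<open>The full automorphism group\<close>

text \<open>Vertex \<open>v\<close> is the \<open>(v div 2)\<close>-th vertex of the colour class of parity \<open>v\<close>; \<open>K33_aut p q t\<close>
  permutes the even class by \<open>p\<close> and the odd class by \<open>q\<close>, and swaps the classes iff \<open>t\<close>.\<close>

definition K33_aut :: "(nat \<Rightarrow> nat) \<Rightarrow> (nat \<Rightarrow> nat) \<Rightarrow> bool \<Rightarrow> nat \<Rightarrow> nat" where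
  "K33_aut p q t v = 2 * (if even v then p else q) (v div 2) + (if t = even v then 1 else 0)"

definition K33_auts :: "(nat \<Rightarrow> nat) set" where
  "K33_auts = {K33_aut p q t | p q t. p permutes {..<3} \<and> q permutes {..<3}}"

lemma even_K33_aut: "even (K33_aut p q t v) \<longleftrightarrow> (t \<noteq> even v)"
  unfolding K33_aut_def by auto

lemma K33_aut_div_2: "K33_aut p q t v div 2 = (if even v then p else q) (v div 2)"
  unfolding K33_aut_def by auto

lemma K33_aut_comp:
  "K33_aut p q t \<circ> K33_aut p' q' t'
    = (if t' then K33_aut (q \<circ> p') (p \<circ> q') (\<not> t) else K33_aut (p \<circ> p') (q \<circ> q') t)"
  by (auto simp: fun_eq_iff K33_aut_def)

lemma K33_aut_id: "K33_aut id id False = id"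
  by (auto simp: fun_eq_iff K33_aut_def)

lemma K33_aut_less:
  assumes "p permutes {..<3}" "q permutes {..<3}" "v < 6"
  shows "K33_aut p q t v < 6"
proof -
  have "(if even v then p else q) (v div 2) < 3"
    using assms permutes_in_image[of _ "{..<3}" "v div 2"] by auto
  then show ?thesis unfolding K33_aut_def by auto
qed

lemma K33_autsI: "p permutes {..<3} \<Longrightarrow> q permutes {..<3} \<Longrightarrow> K33_aut p q t \<in> K33_auts"
  unfolding K33_auts_def by blast

lemma K33_auts_comp:
  assumes "g \<in> K33_auts" "h \<in> K33_auts"
  shows "g \<circ> h \<in> K33_auts"
proof -
  obtain p q t p' q' t' where "g = K33_aut p q t" "h = K33_aut p' q' t'"
    and "p permutes {..<3}" "q permutes {..<3}" "p' permutes {..<3}" "q' permutes {..<3}"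
    using assms unfolding K33_auts_def by blast
  then show ?thesis by (simp add: K33_aut_comp K33_autsI permutes_compose)
qed

lemma K33_auts_inverse:
  assumes "g \<in> K33_auts"
  shows "\<exists>h\<in>K33_auts. g \<circ> h = id \<and> h \<circ> g = id"
proof -
  obtain p q t where g: "g = K33_aut p q t" and pq: "p permutes {..<3}" "q permutes {..<3}"
    using assms unfolding K33_auts_def by blast
  define h where "h = (if t then K33_aut (inv q) (inv p) t else K33_aut (inv p) (inv q) t)"
  have "h \<in> K33_auts"
    using pq unfolding h_def by (simp add: K33_autsI permutes_inv)
  moreover have "g \<circ> h = id \<and> h \<circ> g = id"
    using pq unfolding g h_def by (simp add: K33_aut_comp permutes_inv_o K33_aut_id)
  ultimately show ?thesis by blast
qed

lemma K33_aut_eq_if_eq_on_vertices: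
  assumes "p permutes {..<3}" "q permutes {..<3}" "p' permutes {..<3}" "q' permutes {..<3}"
    and eq: "\<forall>v<6. K33_aut p q t v = K33_aut p' q' t' v"
  shows "p = p' \<and> q = q' \<and> t = t'"
proof (intro conjI)
  have "even (K33_aut p q t 0) \<longleftrightarrow> even (K33_aut p' q' t' 0)"
    using eq by simp
  then show "t = t'" by (simp add: even_K33_aut)
  have "p i = p' i \<and> q i = q' i" for i
  proof (cases "i < 3")
    case True
    then have "2 * i < 6" "2 * i + 1 < 6" by simp_all
    then have "K33_aut p q t (2 * i) div 2 = K33_aut p' q' t' (2 * i) div 2"
      "K33_aut p q t (2 * i + 1) div 2 = K33_aut p' q' t' (2 * i + 1) div 2"
      using eq by simp_all
    then show ?thesis by (simp add: K33_aut_div_2)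
  next
    case False
    then show ?thesis using assms(1-4) by (simp add: permutes_not_in)
  qed
  then show "p = p'" "q = q'" by auto
qed

lemma card_K33_auts: "card K33_auts = 72"
proof -
  define P where "P = {p. p permutes {..<3::nat}}"
  have auts_eq: "K33_auts = (\<lambda>(p, q, t). K33_aut p q t) ` (P \<times> P \<times> UNIV)"
  proof (intro equalityI subsetI)
    fix g assume "g \<in> K33_auts"
    then obtain p q t where "g = K33_aut p q t" "p \<in> P" "q \<in> P"
      unfolding K33_auts_def P_def by blast
    then show "g \<in> (\<lambda>(p, q, t). K33_aut p q t) ` (P \<times> P \<times> UNIV)"
      by (intro image_eqI[where x = "(p, q, t)"]) simp_all
  qed (auto simp: P_def K33_autsI)
  have inj: "inj_on (\<lambda>(p, q, t). K33_aut p q t) (P \<times> P \<times> UNIV)"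
  proof (rule inj_onI)
    fix x y assume xy: "x \<in> P \<times> P \<times> UNIV" "y \<in> P \<times> P \<times> UNIV"
      "(\<lambda>(p, q, t). K33_aut p q t) x = (\<lambda>(p, q, t). K33_aut p q t) y"
    obtain p q t p' q' t' where "x = (p, q, t)" "y = (p', q', t')" by (cases x, cases y)
    with xy show "x = y"
      unfolding P_def using K33_aut_eq_if_eq_on_vertices[of p q p' q' t t'] by simp
  qed
  have "card P = 6"
    unfolding P_def by (simp add: card_permutations[of "{..<3}" 3] fact_numeral)
  have "card K33_auts = card (P \<times> P \<times> (UNIV :: bool set))"
    unfolding auts_eq using inj by (rule card_image)
  also have "\<dots> = 72"
    using \<open>card P = 6\<close> by (simp add: card_cartesian_product)
  finally show ?thesis .
qed

lemma K33_aut_automorphism: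
  assumes "p permutes {..<3}" "q permutes {..<3}"
  shows "G4_automorphism (K33_aut p q t)"
proof (rule G4_automorphismI)
  obtain h where "h \<circ> K33_aut p q t = id"
    using K33_auts_inverse[OF K33_autsI[OF assms]] by blast
  then have "h (K33_aut p q t v) = v" for v by (metis comp_apply id_apply)
  then show "inj_on (K33_aut p q t) {..<6}" by (rule inj_on_inverseI)
  show "K33_aut p q t v < 6" if "v < 6" for v
    using assms that by (rule K33_aut_less)
  show "odd (K33_aut p q t a + K33_aut p q t b)" if "odd (a + b)" for a b
    using that by (auto simp: even_K33_aut)
qed

lemma card_magic_distinct_labellings_eq_72_mult:
  "card (magic_distinct_labellings s) = 72 * card (relabel_orbits K33_auts s)"
proof -
  have "card (magic_distinct_labellings s) = card K33_auts * card (relabel_orbits K33_auts s)"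
  proof (rule card_magic_distinct_labellings_eq_card_mult)
    show "finite K33_auts" "K33_auts \<noteq> {}"
      using card_K33_auts by (auto intro: card_ge_0_finite)
    show "G4_automorphism g" if "g \<in> K33_auts" for g
      using that K33_aut_automorphism unfolding K33_auts_def by blast
    show "\<exists>h\<in>K33_auts. \<forall>v<6. g (h v) = v" if "g \<in> K33_auts" for g
      using K33_auts_inverse[OF that] by (metis comp_apply id_apply)
    show "g = h" if "g \<in> K33_auts" "h \<in> K33_auts" "\<forall>v<6. g v = h v" for g h
      using that K33_aut_eq_if_eq_on_vertices unfolding K33_auts_def by blast
  qed (rule K33_auts_comp)
  then show ?thesis unfolding card_K33_auts .
qed

theorem mainTheorem8:
  fixes s :: nat
  shows "6 dvd h_tilde s"
proof -
  have "12 * h_tilde s = 72 * card (relabel_orbits K33_auts s)"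
    unfolding card_magic_distinct_labellings_eq_12_mult_h_tilde[symmetric]
    by (rule card_magic_distinct_labellings_eq_72_mult)
  then show ?thesis by presburger
qed

end
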